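(* Let $d\ge 0$, $n\ge 1$ and $p$ prime. If $c,c'\in C(d,n,p)$, then both $\operatorname{lcm}(c,c')=(\max(c_1,c_1'),\dots,\max(c_M,c_M'))$ and $\gcd(c,c')=(\min(c_1,c_1'),\dots,\min(c_M,c_M'))$ belong to $C(d,n,p)$. Consequently $C(d,n,p)$, with the componentwise partial order ($c\le c'$ iff $c_i\le c_i'$ for all $i$), is a finite lattice, and in particular it has a unique maximal element.
   Context: Let $p$ be a prime. Every integer $a\ge0$ has base-$p$ expansion $a=\sum_{j\ge0}a_jp^j$ with digits $0\le a_j\le p-1$. For $d\ge1$ let $M=\max\{j: d_j\ne0\}$. Let $S=\mathbf{k}[x_1,\dots,x_n]$ with $\mathbf k$ algebraically closed of characteristic $p$. For a monomial $x^{\underline b}=x_1^{b_1}\cdots x_n^{b_n}$ of degree $d=b_1+\cdots+b_n$, write $b_{i,j}$ for the $j$-th base-$p$ digit of $b_i$. Its carry pattern is $c(\underline b)=(c_1,\dots,c_M)$, the integers determined by $\sum_{i=1}^n\sum_{0\le j<\ell} b_{i,j}p^j = c_\ell p^\ell+\sum_{0\le j<\ell} d_jp^j$ for $1\le \ell\le M$ (with the convention $c_i=0$ for $i<1$ and $i>M$); i.e. $c_\ell$ is the amount carried into the $p^\ell$ column when adding $b_1,\dots,b_n$ in base $p$. $C(d,n,p)$ denotes the set of all carry patterns of degree-$d$ monomials in $n$ variables (for $d=0$ it consists of the empty sequence). *)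

theory Defs
  imports Main "HOL-Computational_Algebra.Primes"
begin

definition digit :: "nat \<Rightarrow> nat \<Rightarrow> nat \<Rightarrow> nat" where
  "digit p a j = (a div p ^ j) mod p"

text \<open>M = max{j. d_j \<noteq> 0} for d \<ge> 1; for d = 0 we set M = 0, so the carry pattern is the empty sequence.\<close>
definition topdigit :: "nat \<Rightarrow> nat \<Rightarrow> nat" where
  "topdigit p d = (if d = 0 then 0 else Max {j. digit p d j \<noteq> 0})"

text \<open>Exponent vector of a monomial in n variables: a list b of length n; its degree is sum_list b.
  The carry c_l is the integer with
  sum_i sum_{j<l} b_{i,j} p^j = c_l p^l + sum_{j<l} d_j p^j.\<close>
definition carry :: "nat \<Rightarrow> nat \<Rightarrow> nat list \<Rightarrow> nat \<Rightarrow> int" where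
  "carry p d b l =
     ((\<Sum>i<length b. \<Sum>j<l. int (digit p (b ! i) j) * int p ^ j)
       - (\<Sum>j<l. int (digit p d j) * int p ^ j)) div (int p ^ l)"

definition carry_pattern :: "nat \<Rightarrow> nat \<Rightarrow> nat list \<Rightarrow> int list" where
  "carry_pattern p d b = map (carry p d b) [1..<topdigit p d + 1]"

definition carry_set :: "nat \<Rightarrow> nat \<Rightarrow> nat \<Rightarrow> int list set" where
  "carry_set d n p = {carry_pattern p d b | b. length b = n \<and> sum_list b = d}"

definition cle :: "int list \<Rightarrow> int list \<Rightarrow> bool" where
  "cle c c' = (length c = length c' \<and> (\<forall>i<length c. c ! i \<le> c' ! i))"

definition clcm :: "int list \<Rightarrow> int list \<Rightarrow> int list" where
  "clcm c c' = map2 max c c'"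

definition cgcd :: "int list \<Rightarrow> int list \<Rightarrow> int list" where
  "cgcd c c' = map2 min c c'"

end

theory Submission
  imports Defs
begin

text \<open>Adding the exponents column by column, the \<open>j\<close>-th base-\<open>p\<close> digits of the
  exponents sum to \<open>d\<^sub>j + p c\<^sub>j\<^sub>+\<^sub>1 - c\<^sub>j\<close> (with \<open>c\<^sub>0 = c\<^sub>M\<^sub>+\<^sub>1 = 0\<close>). Conversely, if each of
  these values lies in \<open>[0, n(p - 1)]\<close>, split it into \<open>n\<close> digits and read off exponents
  with exactly these carries. So \<open>C(d, n, p)\<close> is cut out by the constraints
  \<open>0 \<le> d\<^sub>j + p c\<^sub>j\<^sub>+\<^sub>1 - c\<^sub>j \<le> n(p - 1)\<close>, each increasing in one coordinate and
  decreasing in another; such constraints are preserved by componentwise \<open>max\<close> and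
  \<open>min\<close>. Two maximal elements both equal their join, so the maximal element is unique.\<close>

lemma digit_less: "p > 0 \<Longrightarrow> digit p a j < p"
  by (simp add: digit_def)

lemma sum_digits_eq_mod:
  assumes "p > 0"
  shows "(\<Sum>j<l. digit p a j * p ^ j) = a mod p ^ l"
proof (induction l)
  case (Suc l)
  have "a mod p ^ Suc l = p ^ l * (a div p ^ l mod p) + a mod p ^ l"
    using mod_mult2_eq[of a "p ^ l" p] by (simp add: mult.commute)
  then show ?case using Suc by (simp add: digit_def mult.commute)
qed simp

lemma sum_expansion_Suc:
  fixes t :: "nat \<Rightarrow> nat"
  shows "(\<Sum>j<Suc K. t j * p ^ j) = t 0 + p * (\<Sum>j<K. t (Suc j) * p ^ j)"
  unfolding sum.lessThan_Suc_shift by (simp add: sum_distrib_left ac_simps)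

lemma digit_digit_expansion:
  assumes "\<forall>j. t j < p"
  shows "digit p (\<Sum>j<K. t j * p ^ j) i = (if i < K then t i else 0)"
  using assms
proof (induction i arbitrary: t K)
  case 0
  then show ?case by (cases K) (simp_all add: digit_def sum_expansion_Suc del: sum.lessThan_Suc)
next
  case (Suc i)
  show ?case
  proof (cases K)
    case (Suc K')
    have "p > 0" using Suc.prems by (metis not_less0 neq0_conv)
    then have "digit p (\<Sum>j<K. t j * p ^ j) (Suc i) = digit p (\<Sum>j<K'. t (Suc j) * p ^ j) i"
      using Suc.prems by (simp add: Suc digit_def div_mult2_eq sum_expansion_Suc del: sum.lessThan_Suc)
    then show ?thesis using Suc.IH[of "\<lambda>j. t (Suc j)" K'] Suc.prems Suc by simp
  qed (simp add: digit_def)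
qed

lemma digit_eq_0_above_topdigit:
  assumes "p \<ge> 2" "j > topdigit p d"
  shows "digit p d j = 0"
proof (cases "d = 0")
  case False
  have "{j. digit p d j \<noteq> 0} \<subseteq> {..d}"
  proof
    fix j assume "j \<in> {j. digit p d j \<noteq> 0}"
    then have "d div p ^ j \<noteq> 0" by (metis digit_def mod_0 mem_Collect_eq)
    then have "p ^ j \<le> d" by (metis div_less not_le)
    moreover have "j < p ^ j"
      using less_exp[of j] power_mono[of 2 p j] assms(1) by linarith
    ultimately show "j \<in> {..d}" by simp
  qed
  then have "finite {j. digit p d j \<noteq> 0}" by (rule finite_subset) simp
  then have "digit p d j \<noteq> 0 \<Longrightarrow> j \<le> topdigit p d" by (simp add: topdigit_def False)
  then show ?thesis using assms(2) by linarith
qed (simp add: digit_def)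

lemma less_power_Suc_topdigit:
  assumes "p \<ge> 2"
  shows "d < p ^ Suc (topdigit p d)"
proof -
  define M where "M = topdigit p d"
  define K where "K = Suc (max d M)"
  have "d < 2 ^ d" by (rule less_exp)
  also have "\<dots> \<le> p ^ d" using assms by (simp add: power_mono)
  also have "\<dots> \<le> p ^ K" using assms by (intro power_increasing) (simp_all add: K_def)
  finally have "d < p ^ K" .
  then have "d = (\<Sum>j<K. digit p d j * p ^ j)"
    using assms by (simp add: sum_digits_eq_mod)
  also have "\<dots> = (\<Sum>j<Suc M. digit p d j * p ^ j)"
    by (rule sum.mono_neutral_right) (auto simp: K_def M_def digit_eq_0_above_topdigit[OF assms])
  also have "\<dots> < p ^ Suc M"
    using assms by (simp add: sum_digits_eq_mod del: sum.lessThan_Suc)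
  finally show ?thesis by (simp add: M_def)
qed

lemma sum_digits_eq_mod_int:
  assumes "p > 0"
  shows "(\<Sum>j<l. int (digit p a j) * int p ^ j) = int (a mod p ^ l)"
  unfolding sum_digits_eq_mod[OF assms, symmetric] of_nat_sum of_nat_mult of_nat_power ..

definition column_sum :: "nat \<Rightarrow> nat list \<Rightarrow> nat \<Rightarrow> nat" where
  "column_sum p b j = (\<Sum>i<length b. digit p (b ! i) j)"

lemma column_sum_le:
  assumes "p > 0"
  shows "column_sum p b j \<le> length b * (p - 1)"
proof -
  have "digit p (b ! i) j \<le> p - 1" for i using digit_less[OF assms, of "b ! i" j] by linarith
  then show ?thesis
    using sum_bounded_above[of "{..<length b}" "\<lambda>i. digit p (b ! i) j" "p - 1"]
    by (simp add: column_sum_def)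
qed

lemma sum_column_sums_swap:
  "(\<Sum>j<l. int (column_sum p b j) * int p ^ j)
     = (\<Sum>i<length b. \<Sum>j<l. int (digit p (b ! i) j) * int p ^ j)"
  unfolding column_sum_def of_nat_sum sum_distrib_right by (rule sum.swap)

lemma carry_eq_column_sums:
  "carry p d b l = ((\<Sum>j<l. int (column_sum p b j) * int p ^ j)
                    - (\<Sum>j<l. int (digit p d j) * int p ^ j)) div int p ^ l"
  unfolding carry_def sum_column_sums_swap ..

lemma sum_column_sums:
  assumes "p > 0"
  shows "(\<Sum>j<l. int (column_sum p b j) * int p ^ j) = int (\<Sum>i<length b. b ! i mod p ^ l)"
  unfolding sum_column_sums_swap sum_digits_eq_mod_int[OF assms] of_nat_sum ..

lemma power_mult_carry:
  assumes "p > 0" "sum_list b = d"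
  shows "int p ^ l * carry p d b l = (\<Sum>j<l. int (column_sum p b j) * int p ^ j)
                                      - (\<Sum>j<l. int (digit p d j) * int p ^ j)"
proof -
  let ?A = "\<Sum>i<length b. b ! i mod p ^ l"
  have "?A mod p ^ l = d mod p ^ l mod p ^ l"
    using mod_sum_eq[of "\<lambda>i. b ! i" "p ^ l" "{..<length b}"] assms(2)
    by (simp add: sum_list_sum_nth atLeast0LessThan)
  then have "int ?A mod int p ^ l = int (d mod p ^ l) mod int p ^ l"
    by (metis zmod_int of_nat_power)
  then have "int p ^ l dvd int ?A - int (d mod p ^ l)"
    by (simp only: mod_eq_dvd_iff)
  then show ?thesis
    by (simp only: carry_eq_column_sums sum_column_sums[OF assms(1)] sum_digits_eq_mod_int[OF assms(1)]
        dvd_mult_div_cancel)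
qed

lemma column_sum_carry:
  assumes "p > 0" "sum_list b = d"
  shows "int (column_sum p b j)
           = int (digit p d j) + int p * carry p d b (Suc j) - carry p d b j"
proof -
  let ?S = "\<Sum>i<j. int (column_sum p b i) * int p ^ i"
  and ?D = "\<Sum>i<j. int (digit p d i) * int p ^ i"
  have "int p ^ j * (int p * carry p d b (Suc j)) = int p ^ Suc j * carry p d b (Suc j)"
    by (simp add: power_Suc2 mult.assoc)
  also have "\<dots> = ?S + int (column_sum p b j) * int p ^ j - (?D + int (digit p d j) * int p ^ j)"
    using power_mult_carry[OF assms, of "Suc j"] by simp
  also have "\<dots> = int p ^ j * carry p d b j + int p ^ j * (int (column_sum p b j) - int (digit p d j))"
    using power_mult_carry[OF assms, of j] by (simp add: right_diff_distrib mult.commute)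
  finally have "int p ^ j * (int p * carry p d b (Suc j))
                  = int p ^ j * (carry p d b j + int (column_sum p b j) - int (digit p d j))"
    by (simp add: algebra_simps)
  then show ?thesis using assms(1) by simp
qed

lemma carry_eq_0_if_less:
  assumes "p > 0" "sum_list b = d" "d < p ^ l"
  shows "carry p d b l = 0"
proof -
  have "b ! i mod p ^ l = b ! i" if "i < length b" for i
    using member_le_sum_list[of "b ! i" b] that assms(2,3) by simp
  then have "(\<Sum>i<length b. b ! i mod p ^ l) = d mod p ^ l"
    using assms(2,3) by (simp add: sum_list_sum_nth atLeast0LessThan)
  then have "int p ^ l * carry p d b l = 0"
    by (simp only: power_mult_carry[OF assms(1,2)] sum_column_sums[OF assms(1)]
        sum_digits_eq_mod_int[OF assms(1)] diff_self)
  then show ?thesis using assms(1) by simp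
qed

lemma length_carry_pattern: "length (carry_pattern p d b) = topdigit p d"
  by (simp add: carry_pattern_def)

lemma nth_carry_pattern:
  "i < topdigit p d \<Longrightarrow> carry_pattern p d b ! i = carry p d b (Suc i)"
  by (simp add: carry_pattern_def nth_map del: upt_Suc)

definition carry_at :: "int list \<Rightarrow> nat \<Rightarrow> int" where
  "carry_at c l = (if 1 \<le> l \<and> l \<le> length c then c ! (l - 1) else 0)"

definition admissible_carries :: "nat \<Rightarrow> nat \<Rightarrow> nat \<Rightarrow> int list \<Rightarrow> bool" where
  "admissible_carries d n p c \<longleftrightarrow> length c = topdigit p d \<and>
     (\<forall>j\<le>topdigit p d.
        0 \<le> int (digit p d j) + int p * carry_at c (Suc j) - carry_at c j \<and>
        int (digit p d j) + int p * carry_at c (Suc j) - carry_at c j \<le> int n * (int p - 1))"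

lemma carry_at_carry_pattern:
  assumes "p \<ge> 2" "sum_list b = d" "l \<le> Suc (topdigit p d)"
  shows "carry_at (carry_pattern p d b) l = carry p d b l"
proof -
  consider "l = 0" | "l = Suc (topdigit p d)" | i where "l = Suc i" "i < topdigit p d"
    using assms(3) by (metis Suc_le_lessD le_SucE not0_implies_Suc)
  then show ?thesis
  proof cases
    case 2
    then show ?thesis
      using carry_eq_0_if_less[OF _ assms(2) less_power_Suc_topdigit[OF assms(1)]] assms(1)
      by (simp add: carry_at_def length_carry_pattern)
  qed (simp_all add: carry_at_def carry_def length_carry_pattern nth_carry_pattern)
qed

lemma carry_pattern_admissible:
  assumes "p \<ge> 2" "sum_list b = d"
  shows "admissible_carries d (length b) p (carry_pattern p d b)"
  unfolding admissible_carries_def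
proof (intro conjI allI impI)
  fix j assume j: "j \<le> topdigit p d"
  have p0: "p > 0" using assms(1) by simp
  have "int (column_sum p b j) \<le> int (length b * (p - 1))"
    using column_sum_le[of p b j] assms(1) by (intro of_nat_mono) simp
  also have "\<dots> = int (length b) * (int p - 1)"
    using assms(1) by (simp add: of_nat_diff)
  finally have "int (column_sum p b j) \<le> int (length b) * (int p - 1)" .
  then show "0 \<le> int (digit p d j) + int p * carry_at (carry_pattern p d b) (Suc j)
                  - carry_at (carry_pattern p d b) j"
    and "int (digit p d j) + int p * carry_at (carry_pattern p d b) (Suc j)
           - carry_at (carry_pattern p d b) j \<le> int (length b) * (int p - 1)"
    using column_sum_carry[OF p0 assms(2), of j] carry_at_carry_pattern[OF assms] j assms(1)
    by simp_all
qed (rule length_carry_pattern)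

lemma sum_weighted_telescope:
  fixes e :: "nat \<Rightarrow> 'a::comm_ring_1"
  shows "(\<Sum>j<l. (q * e (Suc j) - e j) * q ^ j) = e l * q ^ l - e 0"
  by (induction l) (simp_all add: algebra_simps)

lemma sum_column_sums_telescope:
  assumes "e 0 = 0"
    and "\<forall>j<l. int (column_sum p b j) = int (digit p d j) + int p * e (Suc j) - e j"
  shows "(\<Sum>j<l. int (column_sum p b j) * int p ^ j)
           = (\<Sum>j<l. int (digit p d j) * int p ^ j) + e l * int p ^ l"
proof -
  have "(\<Sum>j<l. int (column_sum p b j) * int p ^ j)
          = (\<Sum>j<l. int (digit p d j) * int p ^ j + (int p * e (Suc j) - e j) * int p ^ j)"
  proof (intro sum.cong refl)
    fix j assume "j \<in> {..<l}"
    then have column: "int (column_sum p b j) = int (digit p d j) + int p * e (Suc j) - e j"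
      using assms(2) by simp
    show "int (column_sum p b j) * int p ^ j
            = int (digit p d j) * int p ^ j + (int p * e (Suc j) - e j) * int p ^ j"
      unfolding column by (simp add: algebra_simps)
  qed
  then show ?thesis by (simp add: sum.distrib sum_weighted_telescope assms(1))
qed

lemma sum_of_digit_sequences:
  assumes "p > 0" "\<forall>j. s j \<le> n * (p - 1)"
  shows "\<exists>ts. length ts = n \<and> (\<forall>t\<in>set ts. \<forall>j. t j < p)
              \<and> (\<forall>j. (\<Sum>i<n. (ts ! i) j) = s j)"
  using assms(2)
proof (induction n arbitrary: s)
  case (Suc n)
  define h where "h j = min (p - 1) (s j)" for j
  have "\<forall>j. s j - h j \<le> n * (p - 1)"
  proof
    fix j show "s j - h j \<le> n * (p - 1)"
      using Suc.prems[rule_format, of j] by (cases "s j \<le> p - 1") (simp_all add: h_def)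
  qed
  then obtain ts where ts: "length ts = n" "\<forall>t\<in>set ts. \<forall>j. t j < p"
      "\<forall>j. (\<Sum>i<n. (ts ! i) j) = s j - h j"
    using Suc.IH[of "\<lambda>j. s j - h j"] by blast
  have "\<forall>j. (\<Sum>i<Suc n. ((h # ts) ! i) j) = s j"
    using ts(3) by (simp add: sum.lessThan_Suc_shift h_def del: sum.lessThan_Suc)
  moreover have "\<forall>t\<in>set (h # ts). \<forall>j. t j < p"
    using ts(2) assms(1) by (auto simp: h_def)
  ultimately show ?case using ts(1) by (metis length_Cons)
qed simp

lemma digit_expansion_mod:
  fixes t :: "nat \<Rightarrow> nat"
  assumes "\<forall>j. t j < p"
  shows "(\<Sum>j<K. t j * p ^ j) mod p ^ K = (\<Sum>j<K. t j * p ^ j)"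
proof -
  have "p > 0" using assms[rule_format, of 0] by (cases p) simp_all
  then have "(\<Sum>j<K. t j * p ^ j) mod p ^ K = (\<Sum>j<K. digit p (\<Sum>j<K. t j * p ^ j) j * p ^ j)"
    by (rule sum_digits_eq_mod[symmetric])
  then show ?thesis by (simp add: digit_digit_expansion[OF assms])
qed

lemma exponents_with_column_sums:
  assumes "p > 0" "\<forall>j. s j \<le> n * (p - 1)"
  shows "\<exists>b. length b = n \<and> (\<forall>x\<in>set b. x < p ^ K) \<and> (\<forall>j<K. column_sum p b j = s j)"
proof -
  obtain ts where ts: "length ts = n" "\<forall>t\<in>set ts. \<forall>j. t j < p"
      "\<forall>j. (\<Sum>i<n. (ts ! i) j) = s j"
    using sum_of_digit_sequences[OF assms] by blast
  define b where "b = map (\<lambda>t. \<Sum>j<K. t j * p ^ j) ts"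
  have "x < p ^ K" if x: "x \<in> set b" for x
  proof -
    obtain t where "t \<in> set ts" "x = (\<Sum>j<K. t j * p ^ j)" using x unfolding b_def set_map by blast
    then have "x = x mod p ^ K" using ts(2) digit_expansion_mod by metis
    then show ?thesis using assms(1) by (metis mod_less_divisor zero_less_power)
  qed
  moreover have "column_sum p b j = s j" if "j < K" for j
  proof -
    have "digit p (b ! i) j = (ts ! i) j" if "i < n" for i
      using that \<open>j < K\<close> ts(1,2) digit_digit_expansion[of "ts ! i" p K j] by (simp add: b_def)
    then show ?thesis using ts(1,3) by (simp add: column_sum_def b_def)
  qed
  moreover have "length b = n" by (simp add: b_def ts(1))
  ultimately show ?thesis by blast
qed

lemma carry_eq_if_column_sums:
  assumes "p > 0" "e 0 = 0"
    and "\<forall>j<l. int (column_sum p b j) = int (digit p d j) + int p * e (Suc j) - e j"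
  shows "carry p d b l = e l"
  using sum_column_sums_telescope[OF assms(2,3)] assms(1) by (simp add: carry_eq_column_sums)

lemma admissible_in_carry_set:
  assumes "p \<ge> 2" "admissible_carries d n p c"
  shows "c \<in> carry_set d n p"
proof -
  define M where "M = topdigit p d"
  define e where "e = carry_at c"
  define s where "s j = (if j \<le> M then nat (int (digit p d j) + int p * e (Suc j) - e j) else 0)"
    for j
  have p0: "p > 0" using assms(1) by simp
  have len: "length c = M" using assms(2) by (simp add: admissible_carries_def M_def)
  have s_int: "int (s j) = int (digit p d j) + int p * e (Suc j) - e j" if "j \<le> M" for j
    using assms(2) that by (simp add: admissible_carries_def s_def e_def M_def)
  have "\<forall>j. s j \<le> n * (p - 1)"
  proof
    fix j
    have "int (s j) \<le> int (n * (p - 1))"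
      using assms(2) p0 by (simp add: admissible_carries_def s_def e_def M_def of_nat_diff)
    then show "s j \<le> n * (p - 1)" by (simp only: of_nat_le_iff)
  qed
  then obtain b where b: "length b = n" "\<forall>x\<in>set b. x < p ^ Suc M"
      "\<forall>j<Suc M. column_sum p b j = s j"
    using exponents_with_column_sums[OF p0] by blast
  have column: "\<forall>j<Suc M. int (column_sum p b j) = int (digit p d j) + int p * e (Suc j) - e j"
    using b(3) s_int by simp
  have e0: "e 0 = 0" and eM: "e (Suc M) = 0" by (simp_all add: e_def carry_at_def len)
  have "int (sum_list b) = int (\<Sum>i<length b. b ! i mod p ^ Suc M)"
    using b(2) by (simp add: sum_list_sum_nth atLeast0LessThan)
  also have "\<dots> = (\<Sum>j<Suc M. int (digit p d j) * int p ^ j)"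
    using sum_column_sums[OF p0, of b "Suc M"] sum_column_sums_telescope[where e = e, OF e0 column] eM
    by simp
  also have "\<dots> = int d"
    using less_power_Suc_topdigit[OF assms(1)] by (simp add: sum_digits_eq_mod_int[OF p0] M_def)
  finally have "sum_list b = d" by simp
  moreover have "carry_pattern p d b = c"
  proof (rule nth_equalityI)
    fix i assume "i < length (carry_pattern p d b)"
    then have "i < M" by (simp add: length_carry_pattern M_def)
    have "carry p d b (Suc i) = e (Suc i)"
      by (rule carry_eq_if_column_sums[where e = e, OF p0 e0]) (use column \<open>i < M\<close> in simp)
    then show "carry_pattern p d b ! i = c ! i"
      using \<open>i < M\<close> len by (simp add: nth_carry_pattern M_def e_def carry_at_def)
  qed (simp add: length_carry_pattern len M_def)
  ultimately show ?thesis using b(1) by (auto simp: carry_set_def)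
qed

lemma carry_set_eq_admissible:
  assumes "p \<ge> 2"
  shows "carry_set d n p = {c. admissible_carries d n p c}"
  using carry_pattern_admissible[OF assms] admissible_in_carry_set[OF assms]
  by (auto simp: carry_set_def)

lemma carry_at_map2:
  "length c = length c' \<Longrightarrow> f 0 0 = 0 \<Longrightarrow>
     carry_at (map2 f c c') l = f (carry_at c l) (carry_at c' l)"
  by (cases l) (auto simp: carry_at_def)

lemma max_in_band:
  fixes q :: int
  assumes "0 \<le> q" "lo \<le> k + q * a - x" "k + q * a - x \<le> hi"
    and "lo \<le> k + q * a' - x'" "k + q * a' - x' \<le> hi"
  shows "lo \<le> k + q * max a a' - max x x' \<and> k + q * max a a' - max x x' \<le> hi"
  using assms mult_left_mono[of a a' q] mult_left_mono[of a' a q] by (auto simp: max_def)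

lemma min_in_band:
  fixes q :: int
  assumes "0 \<le> q" "lo \<le> k + q * a - x" "k + q * a - x \<le> hi"
    and "lo \<le> k + q * a' - x'" "k + q * a' - x' \<le> hi"
  shows "lo \<le> k + q * min a a' - min x x' \<and> k + q * min a a' - min x x' \<le> hi"
  using assms mult_left_mono[of a a' q] mult_left_mono[of a' a q] by (auto simp: min_def)

lemma admissible_carries_map2:
  assumes c: "admissible_carries d n p c" and c': "admissible_carries d n p c'"
    and f: "f = max \<or> f = min"
  shows "admissible_carries d n p (map2 f c c')"
  unfolding admissible_carries_def
proof (intro conjI allI impI)
  have len: "length c = length c'" using c c' by (simp add: admissible_carries_def)
  then show "length (map2 f c c') = topdigit p d" using c by (simp add: admissible_carries_def)
  fix j assume "j \<le> topdigit p d"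
  then have bands: "0 \<le> int (digit p d j) + int p * carry_at c (Suc j) - carry_at c j"
    "int (digit p d j) + int p * carry_at c (Suc j) - carry_at c j \<le> int n * (int p - 1)"
    "0 \<le> int (digit p d j) + int p * carry_at c' (Suc j) - carry_at c' j"
    "int (digit p d j) + int p * carry_at c' (Suc j) - carry_at c' j \<le> int n * (int p - 1)"
    using c c' by (simp_all add: admissible_carries_def)
  then have "0 \<le> int (digit p d j) + int p * carry_at (map2 f c c') (Suc j) - carry_at (map2 f c c') j
    \<and> int (digit p d j) + int p * carry_at (map2 f c c') (Suc j) - carry_at (map2 f c c') j
        \<le> int n * (int p - 1)"
    using f max_in_band[OF of_nat_0_le_iff bands] min_in_band[OF of_nat_0_le_iff bands]
    by (auto simp: carry_at_map2[OF len])
  then show "0 \<le> int (digit p d j) + int p * carry_at (map2 f c c') (Suc j) - carry_at (map2 f c c') j"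
    and "int (digit p d j) + int p * carry_at (map2 f c c') (Suc j) - carry_at (map2 f c c') j
           \<le> int n * (int p - 1)" by simp_all
qed

lemma finite_carry_set: "finite (carry_set d n p)"
proof -
  have "{b. length b = n \<and> sum_list b = d} \<subseteq> {b. set b \<subseteq> {..d} \<and> length b = n}"
    using member_le_sum_list by fastforce
  then have "finite {b. length b = n \<and> sum_list b = d}"
    by (rule finite_subset) (simp add: finite_lists_length_eq)
  moreover have "carry_set d n p = carry_pattern p d ` {b. length b = n \<and> sum_list b = d}"
    by (auto simp: carry_set_def)
  ultimately show ?thesis by simp
qed

lemma carry_set_nonempty:
  assumes "n \<ge> 1"
  shows "carry_set d n p \<noteq> {}"
proof -
  have "carry_pattern p d (d # replicate (n - 1) 0) \<in> carry_set d n p"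
    unfolding carry_set_def mem_Collect_eq
    by (rule exI[of _ "d # replicate (n - 1) 0"]) (use assms in simp)
  then show ?thesis by blast
qed

lemma length_mem_carry_set: "c \<in> carry_set d n p \<Longrightarrow> length c = topdigit p d"
  by (auto simp: carry_set_def length_carry_pattern)

lemma cle_clcm:
  "length c = length c' \<Longrightarrow> cle c (clcm c c') \<and> cle c' (clcm c c')"
  by (simp add: cle_def clcm_def)

lemma cgcd_cle:
  "length c = length c' \<Longrightarrow> cle (cgcd c c') c \<and> cle (cgcd c c') c'"
  by (simp add: cle_def cgcd_def)

lemma clcm_least: "cle c u \<Longrightarrow> cle c' u \<Longrightarrow> cle (clcm c c') u"
  by (simp add: cle_def clcm_def)

lemma cgcd_greatest: "cle l c \<Longrightarrow> cle l c' \<Longrightarrow> cle l (cgcd c c')"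
  by (simp add: cle_def cgcd_def)

lemma cle_Cons_Cons: "cle (x # xs) (y # ys) \<longleftrightarrow> x \<le> y \<and> cle xs ys"
  by (auto simp: cle_def nth_Cons split: nat.splits)

lemma sum_list_le_if_cle: "cle m c \<Longrightarrow> sum_list m \<le> sum_list c"
proof (induction m arbitrary: c)
  case (Cons x xs)
  then obtain y ys where "c = y # ys" by (cases c) (auto simp: cle_def)
  with Cons show ?case by (fastforce simp: cle_Cons_Cons)
qed (simp add: cle_def)

lemma cle_sum_list_antisym: "cle m c \<Longrightarrow> sum_list c \<le> sum_list m \<Longrightarrow> m = c"
proof (induction m arbitrary: c)
  case (Cons x xs)
  then obtain y ys where c: "c = y # ys" by (cases c) (auto simp: cle_def)
  with Cons.prems have "x \<le> y" "cle xs ys" by (simp_all add: cle_Cons_Cons)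
  with Cons.prems c sum_list_le_if_cle[of xs ys] have "x = y" "sum_list ys \<le> sum_list xs" by simp_all
  with Cons.IH \<open>cle xs ys\<close> c show ?case by simp
qed (simp add: cle_def)

lemma ex1_maximal_if_clcm_closed:
  assumes fin: "finite C" and ne: "C \<noteq> {}"
    and len: "\<forall>c\<in>C. length c = L" and closed: "\<forall>c\<in>C. \<forall>c'\<in>C. clcm c c' \<in> C"
  shows "\<exists>!m. m \<in> C \<and> (\<forall>c\<in>C. cle m c \<longrightarrow> c = m)"
proof (rule ex_ex1I)
  have "Max (sum_list ` C) \<in> sum_list ` C" using fin ne by simp
  then obtain m where m: "m \<in> C" "sum_list m = Max (sum_list ` C)" by auto
  then have "\<forall>c\<in>C. cle m c \<longrightarrow> c = m"
    using fin by (metis Max_ge cle_sum_list_antisym finite_imageI image_eqI)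
  with m(1) show "\<exists>m. m \<in> C \<and> (\<forall>c\<in>C. cle m c \<longrightarrow> c = m)" by blast
next
  fix m m' assume m: "m \<in> C \<and> (\<forall>c\<in>C. cle m c \<longrightarrow> c = m)"
    and m': "m' \<in> C \<and> (\<forall>c\<in>C. cle m' c \<longrightarrow> c = m')"
  then have "clcm m m' \<in> C" "cle m (clcm m m') \<and> cle m' (clcm m m')"
    using closed len cle_clcm by simp_all
  then show "m = m'" using m m' by metis
qed

theorem mainTheorem1:
  fixes d n p :: nat
  assumes "n \<ge> 1" and "prime p"
  shows "(\<forall>c\<in>carry_set d n p. \<forall>c'\<in>carry_set d n p.
            clcm c c' \<in> carry_set d n p \<and> cgcd c c' \<in> carry_set d n p)
       \<and> finite (carry_set d n p) \<and> carry_set d n p \<noteq> {}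
       \<and> (\<forall>c\<in>carry_set d n p. \<forall>c'\<in>carry_set d n p.
            cle c (clcm c c') \<and> cle c' (clcm c c')
            \<and> (\<forall>u\<in>carry_set d n p. cle c u \<and> cle c' u \<longrightarrow> cle (clcm c c') u)
            \<and> cle (cgcd c c') c \<and> cle (cgcd c c') c'
            \<and> (\<forall>l\<in>carry_set d n p. cle l c \<and> cle l c' \<longrightarrow> cle l (cgcd c c')))
       \<and> (\<exists>!m. m \<in> carry_set d n p \<and> (\<forall>c\<in>carry_set d n p. cle m c \<longrightarrow> c = m))"
proof -
  have "p \<ge> 2" using assms(2) prime_ge_2_nat by blast
  then have closed: "\<forall>c\<in>carry_set d n p. \<forall>c'\<in>carry_set d n p.
      clcm c c' \<in> carry_set d n p \<and> cgcd c c' \<in> carry_set d n p"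
    by (simp add: carry_set_eq_admissible clcm_def cgcd_def admissible_carries_map2)
  have lengths: "\<forall>c\<in>carry_set d n p. length c = topdigit p d"
    using length_mem_carry_set by blast
  show ?thesis
    using closed lengths finite_carry_set carry_set_nonempty[OF assms(1)]
      ex1_maximal_if_clcm_closed[OF finite_carry_set carry_set_nonempty[OF assms(1)] lengths]
      cle_clcm cgcd_cle clcm_least cgcd_greatest
    by simp
qed

end
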